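(* Let $k$ be a field of characteristic $p>0$, $k'/k$ a finite purely inseparable field extension with normal generating sequence $\alpha_1,\ldots,\alpha_l$ and sequence of exponents $e_1,\dots,e_l$. Let $\mathfrak B:=k'\otimes_k k'$, $\mathfrak m$ the kernel of the multiplication map $\mathfrak B\to k'$, $a\otimes b\mapsto ab$, and $a_i:=1\otimes\alpha_i-\alpha_i\otimes 1\in\mathfrak m$. Regard $k'\subseteq\mathfrak B$ via $x\mapsto x\otimes 1$. Then: (i) $\mathfrak m$ is generated by $a_1,\dots,a_l$ over $k'$; namely $\mathfrak m=\mathfrak m\cap k'[a_1,\dots,a_l]$, i.e. every element of $\mathfrak m$ is a polynomial in $a_1,\dots,a_l$ with coefficients in $k'$; (ii) for each $1\le i\le l$, the $p^{e_i}$-power map takes $\mathfrak m$ into $k'[a_1^{p^{e_i}},\dots,a_{i-1}^{p^{e_i}}]\cap\mathfrak m$.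
   Context: For a tower $k'/k''/k$ and $x\in k'$, $e_{k''}(x)$ is the least $s$ with $x^{p^s}\in k''$; $x$ is normal in $k'/k''$ if $e_{k''}(x)\geq e_{k''}(y)$ for all $y\in k'$. A normal generating sequence of $k'/k$ is $\alpha_1,\dots,\alpha_l\in k'$ such that, with $k_i=k[\alpha_1,\dots,\alpha_i]$, each $\alpha_i$ is normal in $k'/k_{i-1}$, $\alpha_i\notin k_{i-1}$, and $k_l=k'$; its sequence of exponents is $e_i:=e_{k_{i-1}}(\alpha_i)$. *)

theory Defs
  imports Main "HOL-Computational_Algebra.Primes"
begin

definition is_subring :: "'K::field set \<Rightarrow> bool" where
  "is_subring R \<longleftrightarrow> 0 \<in> R \<and> 1 \<in> R \<and>
     (\<forall>x\<in>R. \<forall>y\<in>R. x + y \<in> R \<and> x - y \<in> R \<and> x * y \<in> R)"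

definition is_subfield :: "'K::field set \<Rightarrow> bool" where
  "is_subfield F \<longleftrightarrow> is_subring F \<and> (\<forall>x\<in>F. inverse x \<in> F)"

definition adj :: "'K::field set \<Rightarrow> (nat \<Rightarrow> 'K) \<Rightarrow> nat \<Rightarrow> 'K set" where
  "adj k \<alpha> i = \<Inter>{R. is_subring R \<and> k \<subseteq> R \<and> \<alpha> ` {1..i} \<subseteq> R}"

definition expo :: "nat \<Rightarrow> 'K::field set \<Rightarrow> 'K \<Rightarrow> nat" where
  "expo p F x = (LEAST s. x ^ (p ^ s) \<in> F)"

text \<open>x normal in k'/k'' (here k' is the whole field, i.e. UNIV).\<close>
definition is_normal_elt :: "nat \<Rightarrow> 'K::field set \<Rightarrow> 'K \<Rightarrow> bool" where
  "is_normal_elt p F x \<longleftrightarrow> (\<forall>y. expo p F x \<ge> expo p F y)"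

definition normal_gen_seq :: "nat \<Rightarrow> 'K::field set \<Rightarrow> (nat \<Rightarrow> 'K) \<Rightarrow> nat \<Rightarrow> bool" where
  "normal_gen_seq p k \<alpha> l \<longleftrightarrow>
     (\<forall>i\<in>{1..l}. is_normal_elt p (adj k \<alpha> (i - 1)) (\<alpha> i) \<and> \<alpha> i \<notin> adj k \<alpha> (i - 1))
     \<and> adj k \<alpha> l = UNIV"

definition fin_dim_over :: "'K::field set \<Rightarrow> bool" where
  "fin_dim_over k \<longleftrightarrow> (\<exists>B. finite B \<and> (\<forall>x. \<exists>c. c ` B \<subseteq> k \<and> x = (\<Sum>b\<in>B. c b * b)))"

text \<open>Elements of k' \<otimes>_k k' are represented by formal sums (lists of pairs (a,b) meaning
  sum of a \<otimes> b). Two formal sums denote the same tensor iff every k-bilinear map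
  agrees on them.\<close>

definition k_bilinear :: "'K::field set \<Rightarrow> ('K \<Rightarrow> 'K \<Rightarrow> 'K) \<Rightarrow> bool" where
  "k_bilinear k \<phi> \<longleftrightarrow>
     (\<forall>a a' b. \<phi> (a + a') b = \<phi> a b + \<phi> a' b) \<and>
     (\<forall>a b b'. \<phi> a (b + b') = \<phi> a b + \<phi> a b') \<and>
     (\<forall>c\<in>k. \<forall>a b. \<phi> (c * a) b = c * \<phi> a b \<and> \<phi> a (c * b) = c * \<phi> a b)"

definition tsum :: "('K::field \<Rightarrow> 'K \<Rightarrow> 'K) \<Rightarrow> ('K \<times> 'K) list \<Rightarrow> 'K" where
  "tsum \<phi> t = sum_list (map (\<lambda>(a, b). \<phi> a b) t)"

definition teq :: "'K::field set \<Rightarrow> ('K \<times> 'K) list \<Rightarrow> ('K \<times> 'K) list \<Rightarrow> bool" where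
  "teq k s t \<longleftrightarrow> (\<forall>\<phi>. k_bilinear k \<phi> \<longrightarrow> tsum \<phi> s = tsum \<phi> t)"

definition tmult :: "('K::field \<times> 'K) list \<Rightarrow> 'K" where
  "tmult t = tsum (*) t"

definition tadd :: "('K::field \<times> 'K) list \<Rightarrow> ('K \<times> 'K) list \<Rightarrow> ('K \<times> 'K) list" where
  "tadd s t = s @ t"

definition tmul :: "('K::field \<times> 'K) list \<Rightarrow> ('K \<times> 'K) list \<Rightarrow> ('K \<times> 'K) list" where
  "tmul s t = concat (map (\<lambda>(a, b). map (\<lambda>(c, d). (a * c, b * d)) t) s)"

primrec tpow :: "('K::field \<times> 'K) list \<Rightarrow> nat \<Rightarrow> ('K \<times> 'K) list" where
  "tpow t 0 = [(1, 1)]"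
| "tpow t (Suc n) = tmul t (tpow t n)"

definition tconst :: "'K::field \<Rightarrow> ('K \<times> 'K) list" where
  "tconst x = [(x, 1)]"

definition tgen :: "'K::field \<Rightarrow> ('K \<times> 'K) list" where
  "tgen a = [(1, a), (- a, 1)]"

text \<open>Representatives of the k'-subalgebra k'[S] of k' \<otimes>_k k' generated by S
  (k' embedded as x \<otimes> 1).\<close>
inductive_set talg :: "('K::field \<times> 'K) list set \<Rightarrow> ('K \<times> 'K) list set" for S where
  coeff: "tconst x \<in> talg S"
| gen: "s \<in> S \<Longrightarrow> s \<in> talg S"
| add: "s \<in> talg S \<Longrightarrow> t \<in> talg S \<Longrightarrow> tadd s t \<in> talg S"
| mul: "s \<in> talg S \<Longrightarrow> t \<in> talg S \<Longrightarrow> tmul s t \<in> talg S"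

end

theory Submission
  imports Defs "HOL-Computational_Algebra.Polynomial_Factorial"
begin

text \<open>Put \<open>q = p^e\<^sub>i\<close>. In characteristic \<open>p\<close> the map \<open>x \<mapsto> x^q\<close> on \<open>k' \<otimes>\<^sub>k k'\<close> is additive, so
  \<open>(\<Sum> a \<otimes> b)^q = \<Sum> a^q \<otimes> b^q\<close>, and \<open>1 \<otimes> \<alpha>\<^sub>j^q = a\<^sub>j^q + \<alpha>\<^sub>j^q \<otimes> 1\<close>. Hence it suffices that
  \<open>y^q \<in> k[\<alpha>\<^sub>1^q, \<dots>, \<alpha>\<^bsub>i-1\<^esub>^q]\<close> for every \<open>y \<in> k'\<close>; part (i) is the case \<open>q = 1\<close> with all
  \<open>l\<close> generators.

  That field-theoretic statement is proved by induction on \<open>i\<close>, adjoining \<open>\<alpha>\<^sub>1\<close> to the base field.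
  The induction hypothesis writes \<open>y^q = P(\<alpha>\<^sub>1)\<close> with \<open>P\<close> over \<open>G = k[\<alpha>\<^sub>1^q, \<dots>, \<alpha>\<^bsub>i-1\<^esub>^q]\<close>, of degree
  \<open>< q\<close> after reduction modulo \<open>X^q - \<alpha>\<^sub>1^q\<close>. With \<open>N = p^(e\<^sub>1 - e\<^sub>i)\<close>, the Frobenius \<open>c \<mapsto> c^N\<close> maps \<open>G\<close>
  into \<open>k\<close>, and \<open>\<alpha>\<^sub>1^N\<close> has exponent exactly \<open>e\<^sub>i\<close> over \<open>k\<close>, hence degree \<open>q\<close>; so the relation
  \<open>P^N(\<alpha>\<^sub>1^N) = y^(qN)\<close> over \<open>k\<close> of degree \<open>< q\<close> is trivial and \<open>P\<close> is constant. Normality of \<open>\<alpha>\<^sub>1\<close>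
  gives \<open>e\<^sub>i \<le> e\<^sub>1\<close>.\<close>

section \<open>Frobenius in characteristic p\<close>

lemma CHAR_eq_prime:
  assumes "prime p" "of_nat p = (0::'a::field)"
  shows "CHAR('a) = p"
proof -
  have "CHAR('a) dvd p" using assms(2) of_nat_eq_0_iff_char_dvd by blast
  moreover have "CHAR('a) \<noteq> 1" by simp
  ultimately show ?thesis using assms(1) by (metis prime_nat_iff)
qed

lemma frobenius_add:
  assumes "prime CHAR('a::comm_ring_1)"
  shows "(x + y :: 'a) ^ (CHAR('a) ^ n) = x ^ (CHAR('a) ^ n) + y ^ (CHAR('a) ^ n)"
  using freshmans_dream'[OF assms refl] by simp

lemma frobenius_diff:
  assumes "prime CHAR('a::comm_ring_1)"
  shows "(x - y :: 'a) ^ (CHAR('a) ^ n) = x ^ (CHAR('a) ^ n) - y ^ (CHAR('a) ^ n)"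
  using frobenius_add[OF assms, of "x - y" y n] by (simp add: algebra_simps)

lemma frobenius_minus:
  assumes "prime CHAR('a::comm_ring_1)"
  shows "(- x :: 'a) ^ (CHAR('a) ^ n) = - (x ^ (CHAR('a) ^ n))"
  using frobenius_diff[OF assms, of 0 x n] assms prime_gt_0_nat by (simp add: power_0_left)

lemma poly_frobenius:
  assumes p: "prime CHAR('a::comm_ring_1)"
  shows "(poly P x :: 'a) ^ (CHAR('a) ^ n) = poly (map_poly (\<lambda>c. c ^ (CHAR('a) ^ n)) P) (x ^ (CHAR('a) ^ n))"
proof -
  have f0: "(\<lambda>c::'a. c ^ (CHAR('a) ^ n)) 0 = 0"
    using p prime_gt_0_nat by (simp add: power_0_left)
  show ?thesis
    by (induction P)
      (simp_all add: f0 map_poly_pCons frobenius_add[OF p] power_mult_distrib)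
qed

lemma linear_power_frobenius:
  assumes "prime CHAR('K::field)"
  shows "[:- (b::'K), 1:] ^ (CHAR('K) ^ n) = [:- (b ^ (CHAR('K) ^ n)):] + monom 1 (CHAR('K) ^ n)"
proof -
  have "[:- b, 1:] = monom 1 1 - [:b:]" by (simp add: monom_altdef)
  then have "[:- b, 1:] ^ (CHAR('K) ^ n) = (monom 1 1) ^ (CHAR('K) ^ n) - [:b:] ^ (CHAR('K) ^ n)"
    using frobenius_diff[of "monom (1::'K) 1" "[:b:]" n] assms by simp
  then show ?thesis by (simp add: monom_power poly_const_pow)
qed

lemma of_nat_choose_CHAR_power_eq_0:
  assumes p: "prime CHAR('K::field)" and j: "0 < j" "j < CHAR('K) ^ n"
  shows "of_nat (CHAR('K) ^ n choose j) = (0::'K)"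
proof -
  let ?q = "CHAR('K) ^ n"
  have "([:1, 1:] :: 'K poly) = [:1:] + monom 1 1" by (simp add: monom_altdef)
  then have "([:1, 1:] :: 'K poly) ^ ?q = [:1:] ^ ?q + (monom 1 1) ^ ?q"
    using frobenius_add[of "[:1:] :: 'K poly" "monom 1 1" n] p by simp
  also have "\<dots> = [:1:] + monom 1 ?q" by (simp add: monom_power poly_const_pow)
  finally have "coeff (([:1, 1:] :: 'K poly) ^ ?q) j = coeff ([:1:] + monom 1 ?q) j" by simp
  then show ?thesis
    using j coeff_linear_poly_power[of j ?q "1::'K" 1]
    by (simp add: coeff_pCons coeff_monom split: nat.splits)
qed

lemma subring_0: "is_subring R \<Longrightarrow> 0 \<in> R" by (simp add: is_subring_def)
lemma subring_1: "is_subring R \<Longrightarrow> 1 \<in> R" by (simp add: is_subring_def)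
lemma subring_add: "is_subring R \<Longrightarrow> x \<in> R \<Longrightarrow> y \<in> R \<Longrightarrow> x + y \<in> R" by (simp add: is_subring_def)
lemma subring_diff: "is_subring R \<Longrightarrow> x \<in> R \<Longrightarrow> y \<in> R \<Longrightarrow> x - y \<in> R" by (simp add: is_subring_def)
lemma subring_mult: "is_subring R \<Longrightarrow> x \<in> R \<Longrightarrow> y \<in> R \<Longrightarrow> x * y \<in> R" by (simp add: is_subring_def)
lemma subring_uminus: "is_subring R \<Longrightarrow> x \<in> R \<Longrightarrow> - x \<in> R"
  using subring_diff[of R 0 x] subring_0[of R] by simp
lemma subring_power: "is_subring R \<Longrightarrow> x \<in> R \<Longrightarrow> x ^ n \<in> R"
  by (induction n) (auto intro: subring_1 subring_mult)
lemma subring_sum: "is_subring R \<Longrightarrow> (\<And>i. i \<in> A \<Longrightarrow> f i \<in> R) \<Longrightarrow> sum f A \<in> R"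
  by (induction A rule: infinite_finite_induct) (auto intro: subring_0 subring_add)
lemma subring_of_nat: "is_subring R \<Longrightarrow> of_nat n \<in> R"
  by (induction n) (auto intro: subring_0 subring_1 subring_add)

lemma subfield_subring: "is_subfield F \<Longrightarrow> is_subring F" by (simp add: is_subfield_def)
lemma subfield_inverse: "is_subfield F \<Longrightarrow> x \<in> F \<Longrightarrow> inverse x \<in> F" by (simp add: is_subfield_def)
lemma subfield_divide: "is_subfield F \<Longrightarrow> x \<in> F \<Longrightarrow> y \<in> F \<Longrightarrow> x / y \<in> F"
  by (simp add: divide_inverse is_subfield_def subring_mult)

lemma subring_frobenius_preimage:
  assumes p: "prime CHAR('K::field)" and F: "is_subring F"
  shows "is_subring {x::'K. x ^ (CHAR('K) ^ n) \<in> F}"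
  unfolding is_subring_def
  using p prime_gt_0_nat[of "CHAR('K)"] F
  by (auto simp: power_0_left frobenius_add[OF p] frobenius_diff[OF p] power_mult_distrib
      subring_0 subring_1 subring_add subring_diff subring_mult)

lemma subring_radicial_is_subfield:
  assumes R: "is_subring R" and FR: "F \<subseteq> R" and F: "is_subfield F"
    and rad: "\<forall>x::'K::field. \<exists>s. x ^ (p ^ s) \<in> F" and p: "p > 0"
  shows "is_subfield R"
  unfolding is_subfield_def
proof (intro conjI ballI R)
  fix x assume x: "x \<in> R"
  show "inverse x \<in> R"
  proof (cases "x = 0")
    case True then show ?thesis using R by (simp add: subring_0)
  next
    case False
    obtain s where s: "x ^ (p ^ s) \<in> F" using rad by blast
    have "x ^ (p ^ s) = x * x ^ (p ^ s - 1)"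
      using p by (simp flip: power_Suc)
    then have "inverse x = x ^ (p ^ s - 1) * inverse (x ^ (p ^ s))"
      using False by (simp add: inverse_mult_distrib)
    moreover have "inverse (x ^ (p ^ s)) \<in> R" using subfield_inverse[OF F s] FR by auto
    ultimately show ?thesis using x R by (metis subring_mult subring_power)
  qed
qed

lemma adj_subring: "is_subring (adj F \<alpha> i)"
  unfolding adj_def is_subring_def by auto
lemma adj_base: "F \<subseteq> adj F \<alpha> i"
  unfolding adj_def by auto
lemma adj_gen: "j \<in> {1..i} \<Longrightarrow> \<alpha> j \<in> adj F \<alpha> i"
  unfolding adj_def by auto
lemma adj_min: "is_subring R \<Longrightarrow> F \<subseteq> R \<Longrightarrow> (\<And>j. j \<in> {1..i} \<Longrightarrow> \<alpha> j \<in> R) \<Longrightarrow> adj F \<alpha> i \<subseteq> R"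
  unfolding adj_def by auto
lemma adj_0: "is_subring F \<Longrightarrow> adj F \<alpha> 0 = F"
  using adj_min[of F F 0 \<alpha>] adj_base[of F \<alpha> 0] by auto
lemma adj_mono: "i \<le> i' \<Longrightarrow> adj F \<alpha> i \<subseteq> adj F \<alpha> i'"
  by (rule adj_min[OF adj_subring]) (use adj_base[of F \<alpha> i'] adj_gen[of _ i' \<alpha> F] in auto)

lemma adj_adj_1: "adj (adj F \<alpha> 1) (\<lambda>j. \<alpha> (Suc j)) m = adj F \<alpha> (Suc m)"
proof
  show "adj (adj F \<alpha> 1) (\<lambda>j. \<alpha> (Suc j)) m \<subseteq> adj F \<alpha> (Suc m)"
    by (rule adj_min[OF adj_subring]) (use adj_mono[of 1 "Suc m" F \<alpha>] adj_gen[of _ "Suc m" \<alpha> F] in auto)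
next
  have "\<alpha> j \<in> adj (adj F \<alpha> 1) (\<lambda>j. \<alpha> (Suc j)) m" if j: "j \<in> {1..Suc m}" for j
  proof (cases "j = 1")
    case True
    then show ?thesis using adj_gen[of 1 1 \<alpha> F] adj_base[of "adj F \<alpha> 1" "\<lambda>j. \<alpha> (Suc j)" m] by auto
  next
    case False
    then obtain j' where "j = Suc j'" "j' \<in> {1..m}" using j by (cases j) auto
    then show ?thesis using adj_gen[of j' m "\<lambda>j. \<alpha> (Suc j)"] by auto
  qed
  moreover have "F \<subseteq> adj (adj F \<alpha> 1) (\<lambda>j. \<alpha> (Suc j)) m"
    using adj_base[of F \<alpha> 1] adj_base[of "adj F \<alpha> 1" "\<lambda>j. \<alpha> (Suc j)" m] by auto
  ultimately show "adj F \<alpha> (Suc m) \<subseteq> adj (adj F \<alpha> 1) (\<lambda>j. \<alpha> (Suc j)) m"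
    by (intro adj_min adj_subring) auto
qed

lemma adj_frobenius_mem:
  fixes \<beta> :: "nat \<Rightarrow> 'K::field"
  assumes "prime CHAR('K)" "is_subring F"
    and "\<And>j. j \<in> {1..i} \<Longrightarrow> \<beta> j ^ (CHAR('K) ^ n) \<in> F"
    and "x \<in> adj F \<beta> i"
  shows "x ^ (CHAR('K) ^ n) \<in> F"
proof -
  have "adj F \<beta> i \<subseteq> {x. x ^ (CHAR('K) ^ n) \<in> F}"
    using assms(2,3) subring_power[OF assms(2)]
    by (intro adj_min subring_frobenius_preimage[OF assms(1,2)]) auto
  then show ?thesis using assms(4) by blast
qed

lemma expo_mem: "\<exists>s. x ^ (p ^ s) \<in> F \<Longrightarrow> x ^ (p ^ expo p F x) \<in> F"
  unfolding expo_def by (rule LeastI_ex)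
lemma expo_le: "x ^ (p ^ s) \<in> F \<Longrightarrow> expo p F x \<le> s"
  unfolding expo_def by (rule Least_le)
lemma not_mem_below_expo: "s < expo p F x \<Longrightarrow> x ^ (p ^ s) \<notin> F"
  unfolding expo_def by (rule not_less_Least)
lemma expo_antimono:
  assumes "F \<subseteq> F'" "\<exists>s. x ^ (p ^ s) \<in> F"
  shows "expo p F' x \<le> expo p F x"
  using expo_mem[OF assms(2)] assms(1) by (intro expo_le) auto

lemma power_prime_power_mem_mono:
  assumes "is_subring F" "x ^ (p ^ s) \<in> F" "s \<le> t"
  shows "x ^ (p ^ t) \<in> F"
proof -
  have "x ^ (p ^ t) = (x ^ (p ^ s)) ^ (p ^ (t - s))"
    using assms(3) by (simp flip: power_mult power_add)
  then show ?thesis using assms subring_power by metis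
qed

lemma normal_elt_expo_power_mem:
  assumes "is_subring F" "\<forall>x. \<exists>s. x ^ (p ^ s) \<in> F" "is_normal_elt p F a"
  shows "x ^ (p ^ expo p F a) \<in> F"
  using power_prime_power_mem_mono[OF assms(1) expo_mem] assms(2,3)
  unfolding is_normal_elt_def by blast

section \<open>Polynomials with coefficients in a subring\<close>

definition poly_over :: "'K::field set \<Rightarrow> 'K poly \<Rightarrow> bool" where
  "poly_over F P \<longleftrightarrow> (\<forall>n. coeff P n \<in> F)"

lemma poly_over_add: "is_subring F \<Longrightarrow> poly_over F P \<Longrightarrow> poly_over F Q \<Longrightarrow> poly_over F (P + Q)"
  by (simp add: poly_over_def subring_add)
lemma poly_over_diff: "is_subring F \<Longrightarrow> poly_over F P \<Longrightarrow> poly_over F Q \<Longrightarrow> poly_over F (P - Q)"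
  by (simp add: poly_over_def subring_diff)
lemma poly_over_mult: "is_subring F \<Longrightarrow> poly_over F P \<Longrightarrow> poly_over F Q \<Longrightarrow> poly_over F (P * Q)"
  unfolding poly_over_def coeff_mult by (auto intro!: subring_sum subring_mult)
lemma poly_over_smult: "is_subring F \<Longrightarrow> c \<in> F \<Longrightarrow> poly_over F P \<Longrightarrow> poly_over F (smult c P)"
  by (simp add: poly_over_def subring_mult)
lemma poly_over_monom: "is_subring F \<Longrightarrow> c \<in> F \<Longrightarrow> poly_over F (monom c n)"
  by (simp add: poly_over_def coeff_monom subring_0)
lemma poly_over_const: "is_subring F \<Longrightarrow> c \<in> F \<Longrightarrow> poly_over F [:c:]"
  by (simp add: poly_over_def coeff_pCons subring_0 split: nat.splits)
lemma poly_over_0: "is_subring F \<Longrightarrow> poly_over F 0"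
  by (simp add: poly_over_def subring_0)

lemma poly_over_div_monic:
  assumes F: "is_subring F" and P: "poly_over F P" "lead_coeff P = 1"
  shows "poly_over F Q \<Longrightarrow>
    \<exists>S R. poly_over F S \<and> poly_over F R \<and> Q = P * S + R \<and> (R = 0 \<or> degree R < degree P)"
proof (induction "degree Q" arbitrary: Q rule: less_induct)
  case less
  show ?case
  proof (cases "degree Q < degree P")
    case True
    then show ?thesis using less.prems poly_over_0[OF F] by (intro exI[of _ 0] exI[of _ Q]) auto
  next
    case False
    define M where "M = monom (lead_coeff Q) (degree Q - degree P)"
    define Q' where "Q' = Q - M * P"
    have M: "poly_over F M" unfolding M_def using less.prems by (intro poly_over_monom F) (simp add: poly_over_def)
    have Q': "poly_over F Q'" unfolding Q'_def by (intro poly_over_diff poly_over_mult F M P less.prems)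
    have "degree (M * P) \<le> degree Q"
      using False unfolding M_def
      by (intro order.trans[OF degree_mult_le]) (auto intro: order.trans[OF add_le_mono[OF degree_monom_le order.refl]])
    then have "degree Q' \<le> degree Q" unfolding Q'_def by (intro degree_diff_le) auto
    moreover have "coeff Q' (degree Q) = 0"
      using False P(2) unfolding Q'_def M_def by (simp add: coeff_monom_mult)
    ultimately consider "Q' = 0" | "degree Q' < degree Q"
      by (metis leading_coeff_0_iff order_le_imp_less_or_eq)
    then show ?thesis
    proof cases
      case 1
      then have "Q = P * M + 0" unfolding Q'_def by (simp add: mult.commute)
      then show ?thesis using M poly_over_0[OF F] by blast
    next
      case 2
      from less.hyps[OF this Q'] obtain S R
        where SR: "poly_over F S" "poly_over F R" "Q' = P * S + R" "R = 0 \<or> degree R < degree P"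
        by blast
      have "Q = P * (S + M) + R" using SR(3) unfolding Q'_def by (simp add: algebra_simps)
      then show ?thesis using SR poly_over_add[OF F SR(1) M] by blast
    qed
  qed
qed

lemma poly_over_monic_root:
  assumes F: "is_subfield F" and R: "poly_over F R" "R \<noteq> 0" "poly R \<beta> = 0"
  shows "\<exists>P. poly_over F P \<and> lead_coeff P = 1 \<and> degree P = degree R \<and> poly P \<beta> = 0"
proof (intro exI conjI)
  let ?c = "inverse (lead_coeff R)"
  have "?c \<in> F" using R(1) F by (simp add: poly_over_def subfield_inverse)
  then show "poly_over F (smult ?c R)" using F R(1) by (simp add: poly_over_smult subfield_subring)
  show "lead_coeff (smult ?c R) = 1" "degree (smult ?c R) = degree R" "poly (smult ?c R) \<beta> = 0"
    using R(2,3) by simp_all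
qed

lemma minimal_monic_root_dvd:
  assumes F: "is_subfield F"
    and P: "poly_over F P" "lead_coeff P = 1" "poly P \<beta> = 0"
    and min: "\<And>R. poly_over F R \<Longrightarrow> R \<noteq> 0 \<Longrightarrow> poly R \<beta> = 0 \<Longrightarrow> degree P \<le> degree R"
    and Q: "poly_over F Q" "poly Q \<beta> = 0"
  shows "P dvd Q"
proof -
  obtain S R where SR: "poly_over F R" "Q = P * S + R" "R = 0 \<or> degree R < degree P"
    using poly_over_div_monic[OF subfield_subring[OF F] P(1,2) Q(1)] by blast
  have "poly R \<beta> = 0" using SR(2) P(3) Q(2) by simp
  then have "R = 0" using SR(1,3) min by fastforce
  then show ?thesis using SR(2) by simp
qed

lemma monic_dvd_linear_power:
  fixes b :: "'K::field"
  shows "P * S = [:- b, 1:] ^ N \<Longrightarrow> lead_coeff P = 1 \<Longrightarrow> P = [:- b, 1:] ^ degree P"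
proof (induction N arbitrary: P S)
  case 0
  then have "degree (P * S) = 0" by simp
  moreover have "P \<noteq> 0" "S \<noteq> 0" using 0 by auto
  ultimately have "degree P = 0" by (simp add: degree_mult_eq)
  then show ?case using 0(2) by (metis degree_eq_zeroE lead_coeff_pCons(2) one_pCons pCons_0_0 power_0)
next
  case (Suc N)
  have "poly (P * S) b = 0" using Suc.prems(1) by simp
  then consider "poly P b = 0" | "poly S b = 0" by auto
  then show ?case
  proof cases
    case 1
    then obtain P1 where P1: "P = [:- b, 1:] * P1" using poly_eq_0_iff_dvd by (metis dvdE)
    have "[:- b, 1:] * (P1 * S) = [:- b, 1:] * [:- b, 1:] ^ N" by (metis P1 Suc.prems(1) mult.assoc power_Suc)
    then have "P1 * S = [:- b, 1:] ^ N" by (metis mult_cancel_left pCons_eq_0_iff one_neq_zero)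
    moreover have "lead_coeff P1 = 1"
      using Suc.prems(2) lead_coeff_mult[of "[:- b, 1:]" P1] by (simp add: P1)
    ultimately have "P1 = [:- b, 1:] ^ degree P1" using Suc.IH by blast
    moreover have "degree P = Suc (degree P1)"
      using \<open>lead_coeff P1 = 1\<close> unfolding P1 by (subst degree_mult_eq) auto
    ultimately show ?thesis using P1 by (metis power_Suc)
  next
    case 2
    then obtain S1 where S1: "S = [:- b, 1:] * S1" using poly_eq_0_iff_dvd by (metis dvdE)
    have "[:- b, 1:] * (P * S1) = [:- b, 1:] * [:- b, 1:] ^ N" by (metis S1 Suc.prems(1) mult.left_commute power_Suc)
    then have "P * S1 = [:- b, 1:] ^ N" by (metis mult_cancel_left pCons_eq_0_iff one_neq_zero)
    then show ?thesis using Suc.IH Suc.prems(2) by blast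
  qed
qed

lemma coeff_linear_power_Suc:
  fixes a :: "'a::comm_ring_1"
  shows "coeff ([:a, 1:] ^ Suc n) n = of_nat (Suc n) * a"
  using coeff_linear_poly_power[of n "Suc n" a 1] by simp

lemma pcompose_power_left: "pcompose (Q ^ d) r = pcompose Q r ^ d"
  by (induction d) (simp_all add: pcompose_mult pcompose_1)

lemma coeff_pcompose_monom_mult:
  fixes Q :: "'a::comm_ring_1 poly"
  assumes "p > 0"
  shows "coeff (pcompose Q (monom 1 p)) (p * j) = coeff Q j"
proof (induction Q arbitrary: j)
  case 0 then show ?case by simp
next
  case (pCons a Q)
  show ?case
  proof (cases j)
    case 0 then show ?thesis using assms by (simp add: pcompose_pCons coeff_monom_mult)
  next
    case (Suc j')
    have "p * j \<ge> p" "p * j - p = p * j'" using Suc by (auto simp: algebra_simps)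
    then show ?thesis
      using Suc pCons.IH assms by (simp add: pcompose_pCons coeff_monom_mult coeff_pCons split: nat.splits)
  qed
qed

text \<open>Write \<open>d = p^s m\<close> with \<open>p\<close> not dividing \<open>m\<close>: then \<open>(X - \<beta>)^d = (X^(p^s) - \<beta>^(p^s))^m\<close>,
  whose coefficient next to the leading one is \<open>-m \<beta>^(p^s)\<close>.\<close>
lemma poly_over_linear_power_imp_power_mem:
  assumes p: "prime CHAR('K::field)" and F: "is_subfield F"
  shows "1 \<le> d \<Longrightarrow> poly_over F ([:- (\<beta>::'K), 1:] ^ d) \<Longrightarrow> \<exists>s. CHAR('K) ^ s \<le> d \<and> \<beta> ^ (CHAR('K) ^ s) \<in> F"
proof (induction d arbitrary: \<beta> rule: less_induct)
  case (less d)
  have FR: "is_subring F" using F by (rule subfield_subring)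
  show ?case
  proof (cases "CHAR('K) dvd d")
    case False
    obtain n where d: "d = Suc n" using less.prems(1) by (cases d) auto
    have "coeff ([:- \<beta>, 1:] ^ d) n = of_nat d * (- \<beta>)"
      unfolding d by (rule coeff_linear_power_Suc)
    then have "of_nat d * (- \<beta>) \<in> F"
      using less.prems(2) unfolding poly_over_def by metis
    moreover have nz: "of_nat d \<noteq> (0::'K)" using False of_nat_eq_0_iff_char_dvd by blast
    ultimately have "- ((of_nat d * (- \<beta>)) / of_nat d) \<in> F"
      using subring_of_nat[OF FR] by (intro subring_uminus[OF FR] subfield_divide[OF F]) auto
    then have "\<beta> \<in> F" using nz by simp
    then show ?thesis using less.prems(1) by (intro exI[of _ 0]) simp
  next
    case True
    then obtain d' where d: "d = CHAR('K) * d'" by blast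
    have p1: "CHAR('K) > 1" using p prime_gt_1_nat by blast
    have d'1: "d' \<ge> 1" using less.prems(1) d by (cases d') auto
    have "[:- \<beta>, 1:] ^ d = ([:- \<beta>, 1:] ^ (CHAR('K) ^ 1)) ^ d'" by (simp add: d power_mult)
    also have "\<dots> = pcompose ([:- (\<beta> ^ CHAR('K)), 1:] ^ d') (monom 1 (CHAR('K)))"
      unfolding linear_power_frobenius[OF p]
      by (simp add: pcompose_pCons pcompose_power_left)
    finally have eq: "[:- \<beta>, 1:] ^ d = pcompose ([:- (\<beta> ^ CHAR('K)), 1:] ^ d') (monom 1 (CHAR('K)))" .
    have "poly_over F ([:- (\<beta> ^ CHAR('K)), 1:] ^ d')"
      using less.prems(2) coeff_pcompose_monom_mult[of "CHAR('K)" "[:- (\<beta> ^ CHAR('K)), 1:] ^ d'"] p1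
      unfolding poly_over_def eq[symmetric] by (metis order.strict_trans zero_less_one)
    from less.IH[OF _ d'1 this] obtain s where s: "CHAR('K) ^ s \<le> d'" "(\<beta> ^ CHAR('K)) ^ (CHAR('K) ^ s) \<in> F"
      using d d'1 p1 by auto
    have "CHAR('K) ^ Suc s \<le> d" using s(1) d by simp
    moreover have "\<beta> ^ (CHAR('K) ^ Suc s) \<in> F" using s(2) by (simp add: power_mult)
    ultimately show ?thesis by blast
  qed
qed

text \<open>The monic \<open>P\<close> of least degree with \<open>P(\<beta>) = 0\<close> divides \<open>(X - \<beta>)^(p^n)\<close>, hence is some
  \<open>(X - \<beta>)^d\<close>, and then \<open>\<beta>^(p^s) \<in> F\<close> for some \<open>p^s \<le> d\<close>, forcing \<open>s \<ge> n\<close>.\<close>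
lemma poly_over_root_degree_ge:
  fixes \<beta> :: "'K::field"
  assumes p: "prime CHAR('K)" and F: "is_subfield F"
    and \<beta>: "\<beta> ^ (CHAR('K) ^ n) \<in> F" "\<beta> ^ (CHAR('K) ^ (n - 1)) \<notin> F"
    and R: "poly_over F R" "R \<noteq> 0" "poly R \<beta> = 0"
  shows "CHAR('K) ^ n \<le> degree R"
proof -
  define monic_root where
    "monic_root d \<longleftrightarrow> (\<exists>P. poly_over F P \<and> lead_coeff P = 1 \<and> degree P = d \<and> poly P \<beta> = 0)" for d
  define d where "d = (LEAST d. monic_root d)"
  have min: "d \<le> degree R'" if "poly_over F R'" "R' \<noteq> 0" "poly R' \<beta> = 0" for R'
  proof -
    have "monic_root (degree R')"
      unfolding monic_root_def by (rule poly_over_monic_root[OF F that])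
    then show ?thesis unfolding d_def by (rule Least_le)
  qed
  have "monic_root (degree R)"
    unfolding monic_root_def by (rule poly_over_monic_root[OF F R])
  then have "monic_root d" unfolding d_def by (rule LeastI)
  then obtain P where P: "poly_over F P" "lead_coeff P = 1" "degree P = d" "poly P \<beta> = 0"
    unfolding monic_root_def by blast
  have "poly_over F ([:- \<beta>, 1:] ^ (CHAR('K) ^ n))"
    unfolding linear_power_frobenius[OF p] using \<beta>(1) subfield_subring[OF F]
    by (intro poly_over_add poly_over_const poly_over_monom subring_uminus subring_1)
  moreover have "poly ([:- \<beta>, 1:] ^ (CHAR('K) ^ n)) \<beta> = 0" using p prime_gt_0_nat by simp
  ultimately have "P dvd [:- \<beta>, 1:] ^ (CHAR('K) ^ n)"
    using minimal_monic_root_dvd[OF F P(1,2,4)] min P(3) by blast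
  then have P_eq: "P = [:- \<beta>, 1:] ^ d" using monic_dvd_linear_power P(2,3) by (metis dvdE)
  have "1 \<le> d" using P(4) P_eq by (cases d) auto
  then obtain s where s: "CHAR('K) ^ s \<le> d" "\<beta> ^ (CHAR('K) ^ s) \<in> F"
    using poly_over_linear_power_imp_power_mem[OF p F] P(1) P_eq by metis
  have "\<not> s \<le> n - 1"
    using power_prime_power_mem_mono[OF subfield_subring[OF F] s(2)] \<beta>(2) by blast
  then have "CHAR('K) ^ n \<le> CHAR('K) ^ s"
    using p prime_gt_1_nat[of "CHAR('K)"] by (intro power_increasing) auto
  then show ?thesis using s(1) min[OF R] by linarith
qed

section \<open>Descent of prime-power powers to the adjoined powers\<close>

definition poly_over_values :: "'K::field set \<Rightarrow> 'K \<Rightarrow> 'K set" where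
  "poly_over_values G a = {poly P a | P. poly_over G P}"

lemma subring_poly_over_values:
  assumes G: "is_subring G"
  shows "is_subring (poly_over_values G a)"
  unfolding is_subring_def poly_over_values_def
proof (intro conjI ballI)
  show "0 \<in> {poly P a |P. poly_over G P}" using poly_over_0[OF G] by force
  show "1 \<in> {poly P a |P. poly_over G P}"
    using poly_over_const[OF G subring_1[OF G]] by (intro CollectI exI[of _ 1]) (simp add: one_pCons)
  fix x y assume "x \<in> {poly P a |P. poly_over G P}" "y \<in> {poly P a |P. poly_over G P}"
  then obtain P Q where "poly_over G P" "x = poly P a" "poly_over G Q" "y = poly Q a" by blast
  then show "x + y \<in> {poly P a |P. poly_over G P}" "x - y \<in> {poly P a |P. poly_over G P}"
    "x * y \<in> {poly P a |P. poly_over G P}"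
    using poly_over_add[OF G] poly_over_diff[OF G] poly_over_mult[OF G] by force+
qed

lemma const_mem_poly_over_values: "is_subring G \<Longrightarrow> c \<in> G \<Longrightarrow> c \<in> poly_over_values G a"
  unfolding poly_over_values_def using poly_over_const by force

lemma mem_poly_over_values_self: "is_subring G \<Longrightarrow> a \<in> poly_over_values G a"
  unfolding poly_over_values_def using poly_over_monom[OF _ subring_1, of G 1]
  by (intro CollectI exI[of _ "monom 1 1"]) (simp add: poly_monom)

lemma adj_adj_1_subset_poly_over_values:
  assumes G: "is_subring G" "F \<subseteq> G" and \<beta>: "\<And>j. j \<in> {1..m} \<Longrightarrow> \<beta> j \<in> G"
  shows "adj (adj F \<alpha> 1) \<beta> m \<subseteq> poly_over_values G (\<alpha> 1)"
proof -
  have "adj F \<alpha> 1 \<subseteq> poly_over_values G (\<alpha> 1)"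
    using G const_mem_poly_over_values mem_poly_over_values_self
    by (intro adj_min subring_poly_over_values) fastforce+
  moreover have "\<beta> j \<in> poly_over_values G (\<alpha> 1)" if "j \<in> {1..m}" for j
    using G(1) \<beta>[OF that] by (rule const_mem_poly_over_values)
  ultimately show ?thesis by (rule adj_min[OF subring_poly_over_values[OF G(1)]])
qed

lemma poly_over_values_low_degree:
  assumes G: "is_subring G" and q: "0 < q" "a ^ q \<in> G" and x: "x \<in> poly_over_values G a"
  shows "\<exists>P. poly_over G P \<and> degree P < q \<and> poly P a = x"
proof -
  obtain P0 where P0: "poly_over G P0" "poly P0 a = x" using x unfolding poly_over_values_def by blast
  define M where "M = monom 1 q + [:- (a ^ q):]"
  have M_deg: "degree M = q"
    unfolding M_def using q(1) by (subst degree_add_eq_left) (auto simp: degree_monom_eq)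
  have M: "poly_over G M" "degree M = q" "lead_coeff M = 1" "poly M a = 0"
    using G q M_deg unfolding M_def
    by (auto intro!: poly_over_add poly_over_monom poly_over_const subring_1 subring_uminus
        simp: poly_monom coeff_pCons split: nat.splits)
  obtain S P where "poly_over G P" "P0 = M * S + P" "P = 0 \<or> degree P < degree M"
    using poly_over_div_monic[OF G M(1,3) P0(1)] by blast
  then show ?thesis using M(2,4) P0(2) q(1) by (intro exI[of _ P]) auto
qed

text \<open>Applying the Frobenius \<open>c \<mapsto> c^N\<close> to a relation \<open>P(a) = x\<close> gives a relation over \<open>F\<close> of the
  same degree for \<open>a^N\<close>, which has degree at least \<open>p^n\<close> over \<open>F\<close>.\<close>
lemma poly_over_frobenius_low_degree_const:
  fixes a :: "'K::field"
  assumes p: "prime CHAR('K)" and F: "is_subfield F"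
    and coeff: "\<And>m. coeff P m ^ N \<in> F" and N: "N = CHAR('K) ^ D"
    and deg: "degree P < CHAR('K) ^ n" and val: "poly P a ^ N \<in> F"
    and a: "(a ^ N) ^ (CHAR('K) ^ n) \<in> F" "(a ^ N) ^ (CHAR('K) ^ (n - 1)) \<notin> F"
  shows "degree P = 0"
proof -
  have N0: "N > 0" unfolding N using p prime_gt_0_nat by simp
  define R where "R = map_poly (\<lambda>c. c ^ N) P - [:poly P a ^ N:]"
  have coeff_R: "coeff R m = coeff P m ^ N - (if m = 0 then poly P a ^ N else 0)" for m
    unfolding R_def using N0 by (simp add: coeff_map_poly coeff_pCons split: nat.splits)
  have "poly_over F R"
    unfolding poly_over_def coeff_R using coeff val subfield_subring[OF F]
    by (auto intro!: subring_diff subring_0)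
  moreover have "degree R < CHAR('K) ^ n"
    unfolding R_def using deg degree_map_poly[of "\<lambda>c. c ^ N" P]
    by (intro le_less_trans[OF degree_diff_le_max]) auto
  moreover have "poly R (a ^ N) = 0"
    unfolding R_def N using poly_frobenius[OF p, of P a D] by simp
  ultimately have "R = 0" using poly_over_root_degree_ge[OF p F a] by fastforce
  then have "coeff P m = 0" if "m \<ge> 1" for m
    using coeff_R[of m] that N0 by simp
  then show ?thesis by (metis leading_coeff_0_iff degree_0 less_one not_less)
qed

lemma power_mem_of_mem_poly_over_values:
  fixes a :: "'K::field"
  assumes p: "prime CHAR('K)" and F: "is_subfield F"
    and e: "e = expo CHAR('K) F a" "\<forall>x. x ^ (CHAR('K) ^ e) \<in> F" "n \<le> e"
    and G: "is_subring G" "a ^ (CHAR('K) ^ n) \<in> G" "\<forall>g\<in>G. g ^ (CHAR('K) ^ (e - n)) \<in> F"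
    and y: "y ^ (CHAR('K) ^ n) \<in> poly_over_values G a"
  shows "y ^ (CHAR('K) ^ n) \<in> G"
proof -
  have pow_e: "(x ^ (CHAR('K) ^ k)) ^ (CHAR('K) ^ l) = x ^ (CHAR('K) ^ (k + l))" for x :: 'K and k l
    by (simp flip: power_mult power_add)
  obtain P where P: "poly_over G P" "degree P < CHAR('K) ^ n" "poly P a = y ^ (CHAR('K) ^ n)"
    using poly_over_values_low_degree[OF G(1) _ G(2) y] p prime_gt_0_nat by auto
  have "degree P = 0"
  proof (cases "n = 0")
    case True
    then show ?thesis using P(2) by simp
  next
    case False
    have "a ^ (CHAR('K) ^ (e - 1)) \<notin> F" using False e(1,3) by (intro not_mem_below_expo) simp
    moreover have "e - n + (n - 1) = e - 1" using False e(3) by simp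
    ultimately have "(a ^ (CHAR('K) ^ (e - n))) ^ (CHAR('K) ^ (n - 1)) \<notin> F"
      by (simp only: pow_e not_False_eq_True)
    moreover have "(a ^ (CHAR('K) ^ (e - n))) ^ (CHAR('K) ^ n) \<in> F"
      using e(2,3) by (simp only: pow_e le_add_diff_inverse2)
    moreover have "poly P a ^ (CHAR('K) ^ (e - n)) \<in> F"
      using e(2,3) by (simp add: P(3) pow_e)
    moreover have "coeff P m ^ (CHAR('K) ^ (e - n)) \<in> F" for m
      using G(3) P(1) by (simp add: poly_over_def)
    ultimately show ?thesis
      using poly_over_frobenius_low_degree_const[OF p F _ refl P(2)] by blast
  qed
  then obtain c where "P = [:c:]" by (rule degree_eq_zeroE)
  then show ?thesis using P(1,3) unfolding poly_over_def by (metis coeff_pCons_0 poly_pCons poly_0 mult_zero_right add_0_right)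
qed

lemma normal_sequence_tail:
  fixes F :: "'K::field set"
  assumes "prime p" "is_subfield F" "\<forall>x. \<exists>s. x ^ (p ^ s) \<in> F"
    and "\<forall>j\<in>{1..Suc i}. is_normal_elt p (adj F \<alpha> (j - 1)) (\<alpha> j)"
  shows "is_subfield (adj F \<alpha> 1)" "\<forall>x. \<exists>s. x ^ (p ^ s) \<in> adj F \<alpha> 1"
    and "\<forall>j\<in>{1..i}. is_normal_elt p (adj (adj F \<alpha> 1) (\<lambda>j. \<alpha> (Suc j)) (j - 1)) (\<alpha> (Suc j))"
proof -
  show "is_subfield (adj F \<alpha> 1)"
    using assms(1-3) prime_gt_0_nat by (intro subring_radicial_is_subfield[OF adj_subring adj_base]) auto
  show "\<forall>x. \<exists>s. x ^ (p ^ s) \<in> adj F \<alpha> 1"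
    using assms(3) adj_base[of F \<alpha> 1] by blast
  show "\<forall>j\<in>{1..i}. is_normal_elt p (adj (adj F \<alpha> 1) (\<lambda>j. \<alpha> (Suc j)) (j - 1)) (\<alpha> (Suc j))"
  proof
    fix j assume "j \<in> {1..i}"
    then show "is_normal_elt p (adj (adj F \<alpha> 1) (\<lambda>j. \<alpha> (Suc j)) (j - 1)) (\<alpha> (Suc j))"
      using bspec[OF assms(4), of "Suc j"] adj_adj_1[of F \<alpha> "j - 1"] by simp
  qed
qed

lemma power_mem_adj_powers:
  fixes F :: "'K::field set" and \<alpha> :: "nat \<Rightarrow> 'K"
  assumes p: "prime p" "CHAR('K) = p"
  shows "1 \<le> i \<Longrightarrow> is_subfield F \<Longrightarrow> \<forall>x::'K. \<exists>s. x ^ (p ^ s) \<in> F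
    \<Longrightarrow> \<forall>j\<in>{1..i}. is_normal_elt p (adj F \<alpha> (j - 1)) (\<alpha> j)
    \<Longrightarrow> y ^ (p ^ expo p (adj F \<alpha> (i - 1)) (\<alpha> i))
          \<in> adj F (\<lambda>j. \<alpha> j ^ (p ^ expo p (adj F \<alpha> (i - 1)) (\<alpha> i))) (i - 1)"
proof (induction i arbitrary: F \<alpha> y)
  case 0 then show ?case by simp
next
  case (Suc i)
  have pC: "prime CHAR('K)" using p by simp
  have FR: "is_subring F" using Suc.prems(2) by (rule subfield_subring)
  define e where "e = expo p F (\<alpha> 1)"
  have normal_1: "is_normal_elt p F (\<alpha> 1)"
    using bspec[OF Suc.prems(4), of 1] adj_0[OF FR] by simp
  then have max_e: "\<forall>x. x ^ (p ^ e) \<in> F"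
    using normal_elt_expo_power_mem[OF FR Suc.prems(3)] by (simp add: e_def)
  show ?case
  proof (cases "i = 0")
    case True
    then show ?thesis using max_e adj_0[OF FR] by (simp add: e_def)
  next
    case False
    define n where "n = expo p (adj F \<alpha> i) (\<alpha> (Suc i))"
    define G where "G = adj F (\<lambda>j. \<alpha> j ^ p ^ n) i"
    have "y ^ p ^ n \<in> adj (adj F \<alpha> 1) (\<lambda>j. \<alpha> (Suc j) ^ p ^ n) (i - 1)"
      using Suc.IH[OF _ normal_sequence_tail[OF p(1) Suc.prems(2-4)], of y] False adj_adj_1[of F \<alpha> "i - 1"]
      by (simp add: n_def)
    also have "\<dots> \<subseteq> poly_over_values G (\<alpha> 1)"
      unfolding G_def using adj_gen[of _ i "\<lambda>j. \<alpha> j ^ p ^ n" F]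
      by (intro adj_adj_1_subset_poly_over_values adj_subring adj_base) auto
    finally have "y ^ p ^ n \<in> poly_over_values G (\<alpha> 1)" .
    moreover have "n \<le> e"
    proof -
      have "n \<le> expo p F (\<alpha> (Suc i))"
        unfolding n_def using adj_base[of F \<alpha> i] Suc.prems(3) by (intro expo_antimono) auto
      also have "\<dots> \<le> e" using normal_1 by (simp add: is_normal_elt_def e_def)
      finally show ?thesis .
    qed
    moreover have "\<forall>g\<in>G. g ^ (p ^ (e - n)) \<in> F"
    proof
      fix g assume "g \<in> G"
      moreover have "(\<alpha> j ^ p ^ n) ^ (p ^ (e - n)) \<in> F" for j
        using max_e \<open>n \<le> e\<close> by (metis power_mult power_add le_add_diff_inverse)
      ultimately show "g ^ (p ^ (e - n)) \<in> F"
        unfolding G_def using adj_frobenius_mem[OF pC FR] p(2) by metis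
    qed
    moreover have "\<alpha> 1 ^ p ^ n \<in> G"
      unfolding G_def using False adj_gen[of 1 i "\<lambda>j. \<alpha> j ^ p ^ n" F] by simp
    ultimately have "y ^ p ^ n \<in> G"
      using power_mem_of_mem_poly_over_values[OF pC Suc.prems(2), of e "\<alpha> 1" n G y]
        max_e adj_subring[of F] p(2) unfolding e_def G_def by blast
    then show ?thesis by (simp add: G_def n_def)
  qed
qed

section \<open>Formal tensors\<close>

lemma tsum_Nil [simp]: "tsum \<phi> [] = 0" by (simp add: tsum_def)
lemma tsum_Cons [simp]: "tsum \<phi> ((a, b) # t) = \<phi> a b + tsum \<phi> t" by (simp add: tsum_def)
lemma tsum_append [simp]: "tsum \<phi> (s @ t) = tsum \<phi> s + tsum \<phi> t" by (simp add: tsum_def)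
lemma tsum_add: "tsum (\<lambda>a b. f a b + g a b) t = tsum f t + tsum g t"
  by (induction t) (auto simp: algebra_simps)
lemma tsum_cmult: "tsum (\<lambda>a b. c * f a b) t = c * tsum f t"
  by (induction t) (auto simp: algebra_simps)

lemma tsum_swap: "tsum (\<lambda>a b. tsum (g a b) t) s = tsum (\<lambda>c d. tsum (\<lambda>a b. g a b c d) s) t"
proof (induction s)
  case Nil then show ?case by (induction t) auto
next
  case (Cons x s) then show ?case by (cases x) (simp add: tsum_add)
qed

definition tshift :: "('K::field \<Rightarrow> 'K \<Rightarrow> 'K) \<Rightarrow> 'K \<Rightarrow> 'K \<Rightarrow> 'K \<Rightarrow> 'K \<Rightarrow> 'K" where
  "tshift \<phi> a b = (\<lambda>c d. \<phi> (a * c) (b * d))"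

lemma tshift_tshift: "tshift (tshift \<phi> a b) c d = tshift \<phi> (a * c) (b * d)"
  by (simp add: tshift_def fun_eq_iff mult.assoc)

lemma tshift_1: "tshift \<phi> 1 1 = \<phi>" by (simp add: tshift_def)

lemma tsum_map_mult: "tsum \<phi> (map (\<lambda>(c, d). (a * c, b * d)) t) = tsum (tshift \<phi> a b) t"
  by (induction t) (auto simp: tshift_def)

lemma tsum_tmul: "tsum \<phi> (tmul s t) = tsum (\<lambda>a b. tsum (tshift \<phi> a b) t) s"
  by (induction s) (auto simp: tmul_def tsum_map_mult)

lemma tmul_Cons: "tmul ((a, b) # s) t = map (\<lambda>(c, d). (a * c, b * d)) t @ tmul s t"
  by (simp add: tmul_def)

lemma tsum_tmul_commute: "tsum \<phi> (tmul s t) = tsum \<phi> (tmul t s)"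
proof -
  have "tsum \<phi> (tmul s t) = tsum (\<lambda>c d. tsum (\<lambda>a b. tshift \<phi> a b c d) s) t"
    unfolding tsum_tmul by (rule tsum_swap)
  also have "\<dots> = tsum \<phi> (tmul t s)"
    unfolding tsum_tmul tshift_def by (simp add: mult.commute)
  finally show ?thesis .
qed

lemma sum_atMost_Suc_choose_split:
  fixes X :: "nat \<Rightarrow> nat \<Rightarrow> 'a::comm_semiring_1"
  shows "(\<Sum>j\<le>Suc n. of_nat (Suc n choose j) * X j (Suc n - j))
       = (\<Sum>j\<le>n. of_nat (n choose j) * X (Suc j) (n - j)) + (\<Sum>j\<le>n. of_nat (n choose j) * X j (Suc n - j))"
proof -
  have "of_nat (Suc n choose j) * X j (Suc n - j)
      = of_nat (n choose j) * X j (Suc n - j) + (if j = 0 then 0 else of_nat (n choose (j - 1)) * X j (Suc n - j))"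
    for j by (cases j) (auto simp: algebra_simps)
  then have "(\<Sum>j\<le>Suc n. of_nat (Suc n choose j) * X j (Suc n - j))
      = (\<Sum>j\<le>Suc n. of_nat (n choose j) * X j (Suc n - j))
        + (\<Sum>j\<le>Suc n. if j = 0 then 0 else of_nat (n choose (j - 1)) * X j (Suc n - j))"
    by (simp only: sum.distrib[symmetric])
  also have "(\<Sum>j\<le>Suc n. of_nat (n choose j) * X j (Suc n - j)) = (\<Sum>j\<le>n. of_nat (n choose j) * X j (Suc n - j))"
    by (simp add: binomial_eq_0)
  also have "(\<Sum>j\<le>Suc n. if j = 0 then 0 else of_nat (n choose (j - 1)) * X j (Suc n - j))
      = (\<Sum>j\<le>n. of_nat (n choose j) * X (Suc j) (n - j))"
    by (subst sum.atMost_Suc_shift) simp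
  finally show ?thesis by (simp add: add.commute)
qed

lemma tsum_tpow_Cons:
  "tsum \<phi> (tpow ((a, b) # v) n)
     = (\<Sum>j\<le>n. of_nat (n choose j) * tsum (tshift \<phi> (a ^ j) (b ^ j)) (tpow v (n - j)))"
proof (induction n arbitrary: \<phi>)
  case 0 then show ?case by (simp add: tshift_def)
next
  case (Suc n)
  define T where "T = tpow ((a, b) # v) n"
  define X where "X = (\<lambda>j m. tsum (tshift \<phi> (a ^ j) (b ^ j)) (tpow v m))"
  have "tsum \<phi> (tpow ((a, b) # v) (Suc n))
      = tsum (tshift \<phi> a b) T + tsum (\<lambda>a' b'. tsum (tshift \<phi> a' b') T) v"
    by (simp add: T_def tsum_tmul tmul_Cons tsum_map_mult)
  also have "tsum (tshift \<phi> a b) T = (\<Sum>j\<le>n. of_nat (n choose j) * X (Suc j) (n - j))"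
    unfolding T_def Suc.IH X_def by (simp add: tshift_tshift)
  also have "tsum (\<lambda>a' b'. tsum (tshift \<phi> a' b') T) v = (\<Sum>j\<le>n. of_nat (n choose j) * X j (Suc n - j))"
  proof -
    define \<psi> where "\<psi> = (\<lambda>c d. tsum (tshift \<phi> c d) v)"
    have tsum_\<psi>: "tsum (tshift \<psi> c d) W = tsum (tshift \<phi> c d) (tmul v W)" for c d W
      unfolding tsum_tmul_commute[of _ v] unfolding tsum_tmul \<psi>_def by (simp add: tshift_def mult.assoc)
    have "tsum (\<lambda>a' b'. tsum (tshift \<phi> a' b') T) v = tsum \<psi> T"
      unfolding \<psi>_def tsum_tmul[symmetric] by (rule tsum_tmul_commute)
    also have "\<dots> = (\<Sum>j\<le>n. of_nat (n choose j) * tsum (tshift \<psi> (a ^ j) (b ^ j)) (tpow v (n - j)))"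
      unfolding T_def by (rule Suc.IH)
    also have "\<dots> = (\<Sum>j\<le>n. of_nat (n choose j) * X j (Suc n - j))"
      unfolding tsum_\<psi> X_def by (intro sum.cong refl) (simp add: Suc_diff_le)
    finally show ?thesis .
  qed
  also have "(\<Sum>j\<le>n. of_nat (n choose j) * X (Suc j) (n - j)) + (\<Sum>j\<le>n. of_nat (n choose j) * X j (Suc n - j))
      = (\<Sum>j\<le>Suc n. of_nat (Suc n choose j) * X j (Suc n - j))"
    by (rule sum_atMost_Suc_choose_split[symmetric])
  finally show ?case unfolding X_def .
qed

definition tfrob :: "nat \<Rightarrow> ('K::field \<times> 'K) list \<Rightarrow> ('K \<times> 'K) list" where
  "tfrob q t = map (\<lambda>(a, b). (a ^ q, b ^ q)) t"

text \<open>The Frobenius \<open>(\<Sum> a \<otimes> b)^q = \<Sum> a^q \<otimes> b^q\<close>; it holds for every \<open>\<phi>\<close>, bilinear or not, because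
  the binomial coefficients \<open>q choose j\<close> with \<open>0 < j < q\<close> vanish in \<open>'K\<close>.\<close>
lemma tsum_tpow_CHAR_power:
  assumes p: "prime CHAR('K::field)"
  shows "tsum \<phi> (tpow (t :: ('K \<times> 'K) list) (CHAR('K) ^ n)) = tsum \<phi> (tfrob (CHAR('K) ^ n) t)"
proof -
  let ?q = "CHAR('K) ^ n"
  have q0: "?q > 0" using p prime_gt_0_nat by simp
  show ?thesis
  proof (induction t arbitrary: \<phi>)
    case Nil
    then show ?case using q0 by (cases ?q) (auto simp: tfrob_def tmul_def)
  next
    case (Cons x v)
    obtain a b where x: "x = (a, b)" by (cases x)
    define g where "g = (\<lambda>j. of_nat (?q choose j) * tsum (tshift \<phi> (a ^ j) (b ^ j)) (tpow v (?q - j)))"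
    have "tsum \<phi> (tpow ((a, b) # v) ?q) = (\<Sum>j\<le>?q. g j)" unfolding g_def by (rule tsum_tpow_Cons)
    also have "\<dots> = (\<Sum>j\<in>{0, ?q}. g j)"
      using of_nat_choose_CHAR_power_eq_0[OF p] by (intro sum.mono_neutral_right) (auto simp: g_def)
    also have "\<dots> = tsum \<phi> (tpow v ?q) + \<phi> (a ^ ?q) (b ^ ?q)"
      using q0 by (simp add: g_def tshift_1 tshift_def)
    finally show ?case using Cons.IH x by (simp add: tfrob_def)
  qed
qed

lemma tmult_tmul: "tmult (tmul s t) = tmult s * tmult t"
proof -
  have "tsum (tshift (*) a b) t = (a * b) * tmult t" for a b :: 'a
    using tsum_cmult[of "a * b" "(*)" t] by (simp add: tmult_def tshift_def mult_ac)
  then show ?thesis unfolding tmult_def tsum_tmul by (induction s) (auto simp: algebra_simps)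
qed

lemma tmult_tpow: "tmult (tpow t n) = tmult t ^ n"
  by (induction n) (simp_all add: tmult_tmul, simp add: tmult_def)

lemma k_bilinear_add_right: "k_bilinear k \<phi> \<Longrightarrow> \<phi> a (b + b') = \<phi> a b + \<phi> a b'"
  by (simp add: k_bilinear_def)
lemma k_bilinear_smult_left: "k_bilinear k \<phi> \<Longrightarrow> c \<in> k \<Longrightarrow> \<phi> (c * a) b = c * \<phi> a b"
  by (simp add: k_bilinear_def)
lemma k_bilinear_smult_right: "k_bilinear k \<phi> \<Longrightarrow> c \<in> k \<Longrightarrow> \<phi> a (c * b) = c * \<phi> a b"
  by (simp add: k_bilinear_def)
lemma k_bilinear_zero_left: "k_bilinear k \<phi> \<Longrightarrow> \<phi> 0 b = 0"
  unfolding k_bilinear_def by (metis add_cancel_right_right add.right_neutral)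
lemma k_bilinear_zero_right: "k_bilinear k \<phi> \<Longrightarrow> \<phi> a 0 = 0"
  unfolding k_bilinear_def by (metis add_cancel_right_right add.right_neutral)
lemma k_bilinear_uminus_left: "k_bilinear k \<phi> \<Longrightarrow> \<phi> (- a) b = - \<phi> a b"
  using k_bilinear_zero_left[of k \<phi> b] unfolding k_bilinear_def
  by (metis add.right_inverse eq_neg_iff_add_eq_0)
lemma k_bilinear_diff_right: "k_bilinear k \<phi> \<Longrightarrow> \<phi> a (b - b') = \<phi> a b - \<phi> a b'"
  using k_bilinear_add_right[of k \<phi> a "b - b'" b'] by simp

lemma k_bilinear_tsum_tshift: "k_bilinear k \<phi> \<Longrightarrow> k_bilinear k (\<lambda>a b. tsum (tshift \<phi> a b) t)"
  unfolding k_bilinear_def tshift_def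
  by (auto simp: distrib_right tsum_add mult.assoc tsum_cmult)

lemma teq_refl: "teq k s s" by (simp add: teq_def)
lemma teq_trans: "teq k s t \<Longrightarrow> teq k t u \<Longrightarrow> teq k s u" by (simp add: teq_def)
lemma teq_tadd: "teq k s s' \<Longrightarrow> teq k t t' \<Longrightarrow> teq k (tadd s t) (tadd s' t')"
  by (simp add: teq_def tadd_def)

lemma teq_tmul_left: "teq k s s' \<Longrightarrow> teq k (tmul s t) (tmul s' t)"
  unfolding teq_def tsum_tmul using k_bilinear_tsum_tshift by blast

lemma teq_tmul: "teq k s s' \<Longrightarrow> teq k t t' \<Longrightarrow> teq k (tmul s t) (tmul s' t')"
  using teq_tmul_left[of k s s' t] teq_tmul_left[of k t t' s']
  unfolding teq_def by (metis tsum_tmul_commute)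

lemma teq_tpow_1: "teq k t (tpow t 1)"
  unfolding teq_def by (simp add: tsum_tmul_commute[of _ t] tsum_tmul tshift_def)

lemma talg_tpow: "s \<in> talg S \<Longrightarrow> tpow s n \<in> talg S"
  by (induction n) (auto intro: talg.mul talg.coeff[of 1, unfolded tconst_def])

definition talg_right :: "'K::field set \<Rightarrow> ('K \<times> 'K) list set \<Rightarrow> 'K set" where
  "talg_right k S = {b. \<exists>s\<in>talg S. teq k [(1, b)] s}"

lemma subset_talg_right: "k \<subseteq> talg_right k S"
proof
  fix c assume c: "c \<in> k"
  have "tsum \<phi> [(1, c)] = tsum \<phi> (tconst c)" if "k_bilinear k \<phi>" for \<phi>
    using k_bilinear_smult_left[OF that c, of 1 1] k_bilinear_smult_right[OF that c, of 1 1]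
    by (simp add: tconst_def)
  then have "teq k [(1, c)] (tconst c)" unfolding teq_def by blast
  then show "c \<in> talg_right k S" unfolding talg_right_def using talg.coeff by blast
qed

lemma subring_talg_right: "is_subring (talg_right k S)"
  unfolding is_subring_def
proof (intro conjI ballI)
  have "teq k [(1, 0)] (tconst 0)" "teq k [(1, 1)] (tconst 1)"
    unfolding teq_def tconst_def by (auto simp: k_bilinear_zero_left k_bilinear_zero_right)
  then show "0 \<in> talg_right k S" "1 \<in> talg_right k S"
    unfolding talg_right_def using talg.coeff by blast+
  fix x y assume "x \<in> talg_right k S" "y \<in> talg_right k S"
  then obtain s t where st: "s \<in> talg S" "teq k [(1, x)] s" "t \<in> talg S" "teq k [(1, y)] t"
    unfolding talg_right_def by blast
  have "teq k [(1, x + y)] (tadd [(1, x)] [(1, y)])"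
    unfolding teq_def tadd_def by (auto simp: k_bilinear_add_right)
  then have "teq k [(1, x + y)] (tadd s t)" using teq_tadd[OF st(2) st(4)] teq_trans by blast
  then show "x + y \<in> talg_right k S" unfolding talg_right_def using talg.add[OF st(1) st(3)] by blast
  have "teq k [(1, x - y)] (tadd [(1, x)] (tmul (tconst (- 1)) [(1, y)]))"
    unfolding teq_def tadd_def tconst_def tmul_def
    by (auto simp: k_bilinear_diff_right k_bilinear_uminus_left)
  moreover have "teq k (tadd [(1, x)] (tmul (tconst (- 1)) [(1, y)])) (tadd s (tmul (tconst (- 1)) t))"
    by (intro teq_tadd teq_tmul st teq_refl)
  ultimately have "teq k [(1, x - y)] (tadd s (tmul (tconst (- 1)) t))" by (rule teq_trans)
  then show "x - y \<in> talg_right k S" unfolding talg_right_def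
    using talg.add[OF st(1) talg.mul[OF talg.coeff st(3)]] by blast
  have "[(1, x * y)] = tmul [(1, x)] [(1, y)]" by (simp add: tmul_def)
  then have "teq k [(1, x * y)] (tmul s t)" using teq_tmul[OF st(2) st(4)] by simp
  then show "x * y \<in> talg_right k S" unfolding talg_right_def using talg.mul[OF st(1) st(3)] by blast
qed

lemma talg_of_talg_right:
  assumes "\<forall>b\<in>snd ` set t. b \<in> talg_right k S"
  shows "\<exists>s\<in>talg S. teq k t s"
  using assms
proof (induction t)
  case Nil
  have "teq k [] (tconst 0)" unfolding teq_def tconst_def by (auto simp: k_bilinear_zero_left)
  then show ?case using talg.coeff by blast
next
  case (Cons x t)
  obtain a b where x: "x = (a, b)" by (cases x)
  from Cons obtain s' where s': "s' \<in> talg S" "teq k t s'" by auto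
  from Cons.prems x obtain s where s: "s \<in> talg S" "teq k [(1, b)] s" unfolding talg_right_def by auto
  have "(a, b) # t = tadd (tmul (tconst a) [(1, b)]) t" by (simp add: tadd_def tconst_def tmul_def)
  moreover have "teq k (tadd (tmul (tconst a) [(1, b)]) t) (tadd (tmul (tconst a) s) s')"
    by (intro teq_tadd teq_tmul teq_refl s s')
  ultimately show ?case using x talg.add[OF talg.mul[OF talg.coeff s(1)] s'(1)] by auto
qed

text \<open>\<open>1 \<otimes> a^q = (1 \<otimes> a - a \<otimes> 1)^q + a^q \<otimes> 1\<close>.\<close>
lemma power_mem_talg_right:
  assumes p: "prime CHAR('K::field)" and "tpow (tgen (a::'K)) (CHAR('K) ^ n) \<in> talg S"
  shows "a ^ (CHAR('K) ^ n) \<in> talg_right k S"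
proof -
  let ?q = "CHAR('K) ^ n"
  have "teq k [(1, a ^ ?q)] (tadd (tpow (tgen a) ?q) (tconst (a ^ ?q)))"
    unfolding teq_def
  proof (intro allI impI)
    fix \<phi> :: "'K \<Rightarrow> 'K \<Rightarrow> 'K" assume \<phi>: "k_bilinear k \<phi>"
    have "tsum \<phi> (tpow (tgen a) ?q) = \<phi> 1 (a ^ ?q) + \<phi> (- (a ^ ?q)) 1"
      using frobenius_minus[OF p, of a n] p prime_gt_0_nat
      by (simp add: tsum_tpow_CHAR_power[OF p] tfrob_def tgen_def)
    then show "tsum \<phi> [(1, a ^ ?q)] = tsum \<phi> (tadd (tpow (tgen a) ?q) (tconst (a ^ ?q)))"
      by (simp add: tadd_def tconst_def k_bilinear_uminus_left[OF \<phi>])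
  qed
  then show ?thesis unfolding talg_right_def using talg.add[OF assms(2) talg.coeff] by blast
qed

lemma tpow_CHAR_power_talg:
  fixes \<alpha> :: "nat \<Rightarrow> 'K::field"
  assumes p: "prime CHAR('K)"
    and pow: "\<And>y. y ^ (CHAR('K) ^ n) \<in> adj k (\<lambda>j. \<alpha> j ^ (CHAR('K) ^ n)) m"
    and gen: "\<And>j. j \<in> {1..m} \<Longrightarrow> tpow (tgen (\<alpha> j)) (CHAR('K) ^ n) \<in> talg S"
  shows "\<exists>s\<in>talg S. teq k (tpow t (CHAR('K) ^ n)) s"
proof -
  have "adj k (\<lambda>j. \<alpha> j ^ (CHAR('K) ^ n)) m \<subseteq> talg_right k S"
    using power_mem_talg_right[OF p gen]
    by (intro adj_min subring_talg_right subset_talg_right) auto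
  then have "\<forall>b\<in>snd ` set (tfrob (CHAR('K) ^ n) t). b \<in> talg_right k S"
    using pow by (auto simp: tfrob_def)
  then obtain s where "s \<in> talg S" "teq k (tfrob (CHAR('K) ^ n) t) s"
    using talg_of_talg_right by blast
  moreover have "teq k (tpow t (CHAR('K) ^ n)) (tfrob (CHAR('K) ^ n) t)"
    unfolding teq_def using tsum_tpow_CHAR_power[OF p] by simp
  ultimately show ?thesis using teq_trans by blast
qed

theorem lemma2p7:
  fixes k :: "'K::field set" and p l :: nat and \<alpha> :: "nat \<Rightarrow> 'K"
  assumes "prime p" and "of_nat p = (0::'K)"
    and "is_subfield k"
    and "fin_dim_over k"
    and "\<forall>x::'K. \<exists>s. x ^ (p ^ s) \<in> k"
    and "normal_gen_seq p k \<alpha> l"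
  shows "(\<forall>t. tmult t = 0 \<longrightarrow>
            (\<exists>s\<in>talg (tgen ` \<alpha> ` {1..l}). teq k t s))
       \<and> (\<forall>i\<in>{1..l}. \<forall>t. tmult t = 0 \<longrightarrow>
            (\<exists>s\<in>talg ((\<lambda>j. tpow (tgen (\<alpha> j)) (p ^ expo p (adj k \<alpha> (i - 1)) (\<alpha> i))) ` {1..<i}).
                teq k (tpow t (p ^ expo p (adj k \<alpha> (i - 1)) (\<alpha> i))) s)
            \<and> tmult (tpow t (p ^ expo p (adj k \<alpha> (i - 1)) (\<alpha> i))) = 0)"
proof -
  have CHAR: "CHAR('K) = p" using CHAR_eq_prime assms(1,2) by blast
  then have pC: "prime CHAR('K)" using assms(1) by simp
  have normal: "\<forall>i\<in>{1..l}. is_normal_elt p (adj k \<alpha> (i - 1)) (\<alpha> i)" and "adj k \<alpha> l = UNIV"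
    using assms(6) unfolding normal_gen_seq_def by auto
  have "\<exists>s\<in>talg (tgen ` \<alpha> ` {1..l}). teq k (tpow t (CHAR('K) ^ 0)) s" for t
    using \<open>adj k \<alpha> l = UNIV\<close>
    by (intro tpow_CHAR_power_talg[OF pC] talg_tpow talg.gen) auto
  then have part1: "\<exists>s\<in>talg (tgen ` \<alpha> ` {1..l}). teq k t s" for t
    by (metis power_0 teq_tpow_1 teq_trans)
  have part2: "\<exists>s\<in>talg ((\<lambda>j. tpow (tgen (\<alpha> j)) (p ^ e)) ` {1..<i}). teq k (tpow t (p ^ e)) s"
    if i: "i \<in> {1..l}" and e: "e = expo p (adj k \<alpha> (i - 1)) (\<alpha> i)" for i e t
  proof -
    have "y ^ (p ^ e) \<in> adj k (\<lambda>j. \<alpha> j ^ (p ^ e)) (i - 1)" for y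
      using power_mem_adj_powers[OF assms(1) CHAR, of i k \<alpha> y] i normal assms(3,5) by (auto simp: e)
    moreover have "tpow (tgen (\<alpha> j)) (p ^ e) \<in> talg ((\<lambda>j. tpow (tgen (\<alpha> j)) (p ^ e)) ` {1..<i})"
      if "j \<in> {1..i - 1}" for j
      using that by (auto intro: talg.gen)
    ultimately show ?thesis using tpow_CHAR_power_talg[OF pC] unfolding CHAR by blast
  qed
  show ?thesis using part1 part2 prime_gt_0_nat[OF assms(1)] by (simp add: tmult_tpow power_0_left)
qed

end
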